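(* Let $I,J\subset\mathbb{R}$ be open intervals and $f\colon I\to\mathbb{R}$, $g\colon J\to\mathbb{R}$ smooth functions, let $\alpha(s)=(s,0,f(s))$ (a curve in the plane $\{y=0\}$) and $\beta(t)=(0,t,g(t))$ (a curve in the plane $\{x=0\}$), and consider the translation surface $$x(s,t)=\alpha(s)\ast\beta(t)=(s,\,t\,e^{f(s)},\,f(s)+g(t)),\qquad (s,t)\in I\times J,$$ in $\mathrm{Sol}_3$. This surface is minimal in each of the following cases: (1) $f\equiv a$ is constant and $g(t)=\log|t+\lambda|+\mu$ for constants $\lambda,\mu$ (with $-\lambda\notin J$); (2) $f(s)=-\log|s+\lambda|+\mu$ for constants $\lambda,\mu$ (with $-\lambda\notin I$) and $g\equiv a$ is constant; (3) $g(t)=\log|t|+\mu$ for a constant $\mu$ (with $0\notin J$) and $f$ is an arbitrary smooth function; (4) $f$ and $g$ are both constant (the surface is a piece of a plane $z=z_0$). Moreover, the planes $x=x_0$ are minimal translation surfaces of type III (obtained with $\alpha(s)=(x_0,0,s)$ and $\beta(t)=(0,t,g(t))$, $g$ arbitrary).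
   Context: $\mathrm{Sol}_3$ is $\mathbb{R}^3$ with coordinates $(x,y,z)$, the Riemannian metric $e^{2z}dx^2+e^{-2z}dy^2+dz^2$, and the Lie group operation $(x,y,z)\ast(x',y',z')=(x+e^{-z}x',\,y+e^{z}y',\,z+z')$, for which the metric is left-invariant. A translation surface $M(\alpha,\beta)$ is a surface parametrized by $x(s,t)=\alpha(s)\ast\beta(t)$ where $\alpha,\beta$ are curves lying in coordinate planes of $\mathbb{R}^3$; it is of type III if $\alpha\subset\{y=0\}$ and $\beta\subset\{x=0\}$. A surface is minimal if its mean curvature (half the trace of the Weingarten map, computed with the Levi-Civita connection of the metric above) vanishes identically. *)

theory Defs
  imports "HOL-Analysis.Analysis"
begin

definition sol_metric :: "real^3 \<Rightarrow> real^3^3" where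
  "sol_metric p = (\<chi> i j. if i = j then
       (if i = 1 then exp (2 * p$3) else if i = 2 then exp (- 2 * p$3) else 1) else 0)"

definition sol_mult :: "real^3 \<Rightarrow> real^3 \<Rightarrow> real^3" where
  "sol_mult p q = vector [p$1 + exp (- p$3) * q$1, p$2 + exp (p$3) * q$2, p$3 + q$3]"

definition metric_partial :: "(real^3 \<Rightarrow> real^3^3) \<Rightarrow> real^3 \<Rightarrow> 3 \<Rightarrow> real^3^3" where
  "metric_partial G p l = (\<chi> i j. deriv (\<lambda>h. G (p + h *\<^sub>R axis l 1) $ i $ j) 0)"

definition christoffel :: "(real^3 \<Rightarrow> real^3^3) \<Rightarrow> real^3 \<Rightarrow> 3 \<Rightarrow> 3 \<Rightarrow> 3 \<Rightarrow> real" where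
  "christoffel G p k i j = (1/2) * (\<Sum>l\<in>UNIV. matrix_inv (G p) $ k $ l *
      (metric_partial G p i $ j $ l + metric_partial G p j $ i $ l - metric_partial G p l $ i $ j))"

definition ginner :: "(real^3 \<Rightarrow> real^3^3) \<Rightarrow> real^3 \<Rightarrow> real^3 \<Rightarrow> real^3 \<Rightarrow> real" where
  "ginner G p u v = u \<bullet> (G p *v v)"

text \<open>Covariant derivative at p of a vector field W in direction u, where a is the
  ordinary (coordinate) derivative of W in direction u.\<close>
definition covd :: "(real^3 \<Rightarrow> real^3^3) \<Rightarrow> real^3 \<Rightarrow> real^3 \<Rightarrow> real^3 \<Rightarrow> real^3 \<Rightarrow> real^3" where
  "covd G p u w a = (\<chi> k. a $ k + (\<Sum>i\<in>UNIV. \<Sum>j\<in>UNIV. christoffel G p k i j * u $ i * w $ j))"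

definition Xs :: "(real \<Rightarrow> real \<Rightarrow> real^3) \<Rightarrow> real \<Rightarrow> real \<Rightarrow> real^3" where
  "Xs X s t = vector_derivative (\<lambda>s'. X s' t) (at s)"
definition Xt :: "(real \<Rightarrow> real \<Rightarrow> real^3) \<Rightarrow> real \<Rightarrow> real \<Rightarrow> real^3" where
  "Xt X s t = vector_derivative (\<lambda>t'. X s t') (at t)"
definition Xss :: "(real \<Rightarrow> real \<Rightarrow> real^3) \<Rightarrow> real \<Rightarrow> real \<Rightarrow> real^3" where
  "Xss X s t = vector_derivative (\<lambda>s'. Xs X s' t) (at s)"
definition Xst :: "(real \<Rightarrow> real \<Rightarrow> real^3) \<Rightarrow> real \<Rightarrow> real \<Rightarrow> real^3" where
  "Xst X s t = vector_derivative (\<lambda>t'. Xs X s t') (at t)"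
definition Xtt :: "(real \<Rightarrow> real \<Rightarrow> real^3) \<Rightarrow> real \<Rightarrow> real \<Rightarrow> real^3" where
  "Xtt X s t = vector_derivative (\<lambda>t'. Xt X s t') (at t)"

text \<open>Unit normal: G^{-1}(X_s x X_t) is G-orthogonal to X_s and X_t; normalise it.\<close>
definition unit_normal :: "(real^3 \<Rightarrow> real^3^3) \<Rightarrow> (real \<Rightarrow> real \<Rightarrow> real^3) \<Rightarrow> real \<Rightarrow> real \<Rightarrow> real^3" where
  "unit_normal G X s t =
     (let p = X s t; c = matrix_inv (G p) *v cross3 (Xs X s t) (Xt X s t)
      in (1 / sqrt (ginner G p c c)) *\<^sub>R c)"

text \<open>Mean curvature H = (E n - 2 F m + Gc l) / (2 (E Gc - F^2)), i.e. half the trace of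
  the Weingarten map, with second fundamental form l = <nabla_{X_s} X_s, N>, etc.\<close>
definition mean_curvature :: "(real^3 \<Rightarrow> real^3^3) \<Rightarrow> (real \<Rightarrow> real \<Rightarrow> real^3) \<Rightarrow> real \<Rightarrow> real \<Rightarrow> real" where
  "mean_curvature G X s t =
     (let p = X s t; a = Xs X s t; b = Xt X s t; N = unit_normal G X s t;
          E = ginner G p a a; F = ginner G p a b; Gc = ginner G p b b;
          l = ginner G p (covd G p a a (Xss X s t)) N;
          m = ginner G p (covd G p a b (Xst X s t)) N;
          n = ginner G p (covd G p b b (Xtt X s t)) N
      in (E * n - 2 * F * m + Gc * l) / (2 * (E * Gc - F\<^sup>2)))"

definition minimal_on :: "(real^3 \<Rightarrow> real^3^3) \<Rightarrow> (real \<Rightarrow> real \<Rightarrow> real^3) \<Rightarrow> real set \<Rightarrow> real set \<Rightarrow> bool" where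
  "minimal_on G X I J \<longleftrightarrow> (\<forall>s\<in>I. \<forall>t\<in>J. mean_curvature G X s t = 0)"

definition smooth_on :: "real set \<Rightarrow> (real \<Rightarrow> real) \<Rightarrow> bool" where
  "smooth_on I f \<longleftrightarrow> (\<forall>k. \<forall>x\<in>I. ((deriv ^^ k) f) differentiable (at x))"

definition open_interval :: "real set \<Rightarrow> bool" where
  "open_interval I \<longleftrightarrow> open I \<and> is_interval I \<and> I \<noteq> {}"

definition translation_surface :: "(real \<Rightarrow> real^3) \<Rightarrow> (real \<Rightarrow> real^3) \<Rightarrow> real \<Rightarrow> real \<Rightarrow> real^3" where
  "translation_surface \<alpha> \<beta> s t = sol_mult (\<alpha> s) (\<beta> t)"

end

theory Submission
  imports Defs
begin

(* The proof is a direct computation in three layers.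
   (1) Geometry of Sol_3: the metric is diagonal, so its inverse, its coordinate derivatives,
       its Christoffel symbols and hence the covariant derivative have explicit closed forms.
   (2) A general reduction: the unit normal is a scalar multiple of G^{-1}(X_s x X_t), and
       <w, G^{-1} v>_G = w . v, so the mean curvature of any parametrized surface vanishes as soon
       as the Euclidean numerator  E <D_b b, n> - 2 F <D_a b, n> + G <D_a a, n>,  n = X_s x X_t,
       vanishes.
   (3) For x(s,t) = (s, t e^{f s}, f s + g t) this numerator is  e^{f s} times an explicit
       polynomial (the type III equation) in f', f'', g', g'', whose factored form shows at a
       glance that it vanishes for g = ln|t+c| with f constant, for f = -ln|s+c| (or constant) with
       g constant, and for g = ln|t| with f arbitrary.
   The planes x = x0 are handled by the same reduction (2) with a direct computation. *)

section \<open>The Sol_3 metric and its Levi-Civita connection\<close>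

definition sol_metric_inv :: "real^3 \<Rightarrow> real^3^3" where
  "sol_metric_inv p = (\<chi> i j. if i = j then
       (if i = 1 then exp (- 2 * p$3) else if i = 2 then exp (2 * p$3) else 1) else 0)"

lemma exp_mult_exp_minus: "exp z * exp (- z) = 1" "exp (- z) * exp z = 1" for z :: real
  by (simp_all add: exp_add[symmetric])

text \<open>The diagonal matrix with reciprocal entries is a two-sided inverse, and two-sided
  inverses are unique, so it is the inverse matrix used in the definitions.\<close>

lemma matrix_inv_sol_metric: "matrix_inv (sol_metric p) = sol_metric_inv p"
proof -
  have inv: "sol_metric p ** sol_metric_inv p = mat 1" "sol_metric_inv p ** sol_metric p = mat 1"
    by (auto simp: matrix_matrix_mult_def sol_metric_def sol_metric_inv_def mat_def vec_eq_iff
        sum_3 forall_3 exp_mult_exp_minus)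
  have h: "sol_metric p ** matrix_inv (sol_metric p) = mat 1 \<and>
           matrix_inv (sol_metric p) ** sol_metric p = mat 1"
    unfolding matrix_inv_def by (rule someI[of _ "sol_metric_inv p"]) (use inv in blast)
  have "matrix_inv (sol_metric p) = (sol_metric_inv p ** sol_metric p) ** matrix_inv (sol_metric p)"
    using inv by (simp add: matrix_mul_lid)
  also have "\<dots> = sol_metric_inv p ** (sol_metric p ** matrix_inv (sol_metric p))"
    by (simp only: matrix_mul_assoc)
  also have "\<dots> = sol_metric_inv p" using h by (simp only: matrix_mul_rid)
  finally show ?thesis .
qed

lemma deriv_exp_affine: "deriv (\<lambda>h. exp (k * (a + h))) 0 = k * exp (k * a)" for k a :: real
proof (rule DERIV_imp_deriv)
  show "((\<lambda>h. exp (k * (a + h))) has_real_derivative k * exp (k * a)) (at 0)"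
    by (auto intro!: derivative_eq_intros)
qed

lemma sol_metric_partial:
  "metric_partial sol_metric p l $ i $ j = (if i = j \<and> l = 3 then
     (if i = 1 then 2 * exp (2 * p$3) else if i = 2 then - 2 * exp (- 2 * p$3) else 0) else 0)"
proof -
  have z: "(p + h *\<^sub>R axis l 1) $ 3 = p $ 3 + (if l = 3 then h else 0)" for h
    by (simp add: axis_def)
  have entry: "sol_metric (p + h *\<^sub>R axis l 1) $ i $ j = (if i = j then
      (if i = 1 then exp (2 * (p $ 3 + (if l = 3 then h else 0)))
       else if i = 2 then exp (- 2 * (p $ 3 + (if l = 3 then h else 0))) else 1) else 0)" for h
    by (simp only: sol_metric_def z vec_lambda_beta)
  have "i = 1 \<or> i = 2 \<or> i = 3" by (rule exhaust_3)
  then show ?thesis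
    unfolding metric_partial_def vec_lambda_beta entry
    by (cases "l = 3"; cases "i = j") (auto simp: deriv_exp_affine[of 2, simplified] deriv_exp_affine[of "-2", simplified])
qed

text \<open>Since the metric is diagonal, only the k-th term of the index sum in the Christoffel
  formula survives.\<close>

lemma christoffel_diagonal:
  "christoffel sol_metric p k i j = 1/2 * sol_metric_inv p $ k $ k *
     (metric_partial sol_metric p i $ j $ k + metric_partial sol_metric p j $ i $ k
      - metric_partial sol_metric p k $ i $ j)"
proof -
  have "(\<Sum>l\<in>UNIV. sol_metric_inv p $ k $ l * (metric_partial sol_metric p i $ j $ l
          + metric_partial sol_metric p j $ i $ l - metric_partial sol_metric p l $ i $ j))
      = (\<Sum>l\<in>UNIV. if l = k then sol_metric_inv p $ k $ k * (metric_partial sol_metric p i $ j $ k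
          + metric_partial sol_metric p j $ i $ k - metric_partial sol_metric p k $ i $ j) else 0)"
    by (rule sum.cong) (auto simp: sol_metric_inv_def)
  then show ?thesis unfolding christoffel_def matrix_inv_sol_metric by simp
qed

lemma sol_christoffel:
  "christoffel sol_metric p k i j =
     (if k = 1 then (if (i = 1 \<and> j = 3) \<or> (i = 3 \<and> j = 1) then 1 else 0)
      else if k = 2 then (if (i = 2 \<and> j = 3) \<or> (i = 3 \<and> j = 2) then -1 else 0)
      else (if i = 1 \<and> j = 1 then - exp (2 * p$3)
            else if i = 2 \<and> j = 2 then exp (- 2 * p$3) else 0))"
proof -
  have "k = 1 \<or> k = 2 \<or> k = 3" "i = 1 \<or> i = 2 \<or> i = 3" "j = 1 \<or> j = 2 \<or> j = 3"
    by (rule exhaust_3)+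
  then show ?thesis
    unfolding christoffel_diagonal sol_metric_partial
    by (elim disjE; simp add: sol_metric_inv_def exp_mult_exp_minus mult.assoc[symmetric])
qed

lemma sol_covd:
  "covd sol_metric p u w a = vector [a$1 + u$1 * w$3 + u$3 * w$1,
     a$2 - u$2 * w$3 - u$3 * w$2, a$3 - exp (2 * p$3) * u$1 * w$1 + exp (- 2 * p$3) * u$2 * w$2]"
  unfolding covd_def sol_christoffel
  by (simp add: vec_eq_iff forall_3 sum_3 algebra_simps)

definition sol_inner :: "real^3 \<Rightarrow> real^3 \<Rightarrow> real^3 \<Rightarrow> real" where
  "sol_inner p u v = exp (2 * p$3) * u$1 * v$1 + exp (- 2 * p$3) * u$2 * v$2 + u$3 * v$3"

lemma sol_ginner: "ginner sol_metric p u v = sol_inner p u v"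
  by (simp add: ginner_def sol_inner_def sol_metric_def inner_vec_def sum_3
      matrix_vector_mult_def algebra_simps)

lemma sol_ginner_raised: "ginner sol_metric p w (r *\<^sub>R (sol_metric_inv p *v x)) = r * (w \<bullet> x)"
proof -
  have "exp (- 2 * z) = 1 / exp (2 * z)" for z :: real
    using exp_minus[of "2 * z"] by (simp add: divide_inverse)
  then show ?thesis
    unfolding sol_ginner
    by (simp add: sol_inner_def sol_metric_inv_def inner_vec_def sum_3 matrix_vector_mult_def
        field_simps exp_mult_exp_minus)
qed

section \<open>Reduction of minimality to a Euclidean numerator\<close>

text \<open>The numerator of the mean curvature with the unit normal replaced by the Euclidean cross
  product n = a x b of the tangent vectors a = X_s, b = X_t; the second derivatives are ss, st, tt.\<close>

definition mc_numerator :: "real^3 \<Rightarrow> real^3 \<Rightarrow> real^3 \<Rightarrow> real^3 \<Rightarrow> real^3 \<Rightarrow> real^3 \<Rightarrow> real" where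
  "mc_numerator p a b ss st tt = sol_inner p a a * (covd sol_metric p b b tt \<bullet> cross3 a b)
     - 2 * sol_inner p a b * (covd sol_metric p a b st \<bullet> cross3 a b)
     + sol_inner p b b * (covd sol_metric p a a ss \<bullet> cross3 a b)"

text \<open>Since N = r G^{-1}(a x b), each second fundamental form coefficient is r times the Euclidean
  product with a x b, so H is r times the numerator over 2(EG - F^2).\<close>

lemma mean_curvature_eq_0_if_numerator:
  assumes "mc_numerator (X s t) (Xs X s t) (Xt X s t) (Xss X s t) (Xst X s t) (Xtt X s t) = 0"
  shows "mean_curvature sol_metric X s t = 0"
proof -
  define p a b where "p = X s t" "a = Xs X s t" "b = Xt X s t"
  define c where "c = sol_metric_inv p *v cross3 a b"
  define r where "r = 1 / sqrt (ginner sol_metric p c c)"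
  have normal: "unit_normal sol_metric X s t = r *\<^sub>R c"
    unfolding unit_normal_def Let_def matrix_inv_sol_metric p_a_b_def c_def r_def by simp
  have "mean_curvature sol_metric X s t = r * mc_numerator p a b (Xss X s t) (Xst X s t) (Xtt X s t)
       / (2 * (sol_inner p a a * sol_inner p b b - (sol_inner p a b)\<^sup>2))"
    unfolding mean_curvature_def Let_def p_a_b_def[symmetric] normal c_def sol_ginner_raised
    by (simp add: sol_ginner mc_numerator_def algebra_simps)
  then show ?thesis using assms unfolding p_a_b_def by simp
qed

lemma vector3_has_vector_derivative:
  assumes "(f1 has_real_derivative d1) (at x)" "(f2 has_real_derivative d2) (at x)"
    "(f3 has_real_derivative d3) (at x)"
  shows "((\<lambda>x. vector [f1 x, f2 x, f3 x] :: real^3) has_vector_derivative vector [d1, d2, d3]) (at x)"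
proof -
  have curve: "(\<lambda>x. vector [f1 x, f2 x, f3 x] :: real^3) =
      (\<lambda>x. f1 x *\<^sub>R axis 1 1 + f2 x *\<^sub>R axis 2 1 + f3 x *\<^sub>R axis 3 1)"
    by (rule ext) (simp add: vec_eq_iff forall_3 axis_def)
  have velocity: "(vector [d1, d2, d3] :: real^3) = d1 *\<^sub>R axis 1 1 + d2 *\<^sub>R axis 2 1 + d3 *\<^sub>R axis 3 1"
    by (simp add: vec_eq_iff forall_3 axis_def)
  show ?thesis unfolding curve velocity
    using assms by (auto intro!: derivative_eq_intros)
qed

lemma smooth_on_derivatives:
  assumes "smooth_on I f" "x \<in> I"
  shows "(f has_real_derivative deriv f x) (at x)"
    and "(deriv f has_real_derivative deriv (deriv f) x) (at x)"
proof -
  have "((deriv ^^ 0) f) differentiable (at x)" "((deriv ^^ 1) f) differentiable (at x)"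
    using assms unfolding smooth_on_def by blast+
  then show "(f has_real_derivative deriv f x) (at x)"
    "(deriv f has_real_derivative deriv (deriv f) x) (at x)"
    by (simp_all add: DERIV_deriv_iff_real_differentiable)
qed

lemma constant_on_has_derivative:
  assumes "open I" "x \<in> I" "\<forall>s\<in>I. f s = a"
  shows "(f has_real_derivative 0) (at x)"
  by (rule has_field_derivative_transform_within_open[where f="\<lambda>_. a" and S=I]) (use assms in auto)

lemma ln_abs_has_derivative:
  fixes x c :: real
  assumes "x + c \<noteq> 0"
  shows "((\<lambda>x. ln \<bar>x + c\<bar>) has_real_derivative 1 / (x + c)) (at x)"
proof (cases "x + c > 0")
  case True
  have "((\<lambda>x. ln (x + c)) has_real_derivative 1 / (x + c)) (at x)"
    using True by (auto intro!: derivative_eq_intros simp: field_simps)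
  then show ?thesis
    by (rule has_field_derivative_transform_within_open[where S="{-c<..}"]) (use True in auto)
next
  case False
  then have neg: "x + c < 0" using assms by simp
  have "((\<lambda>x. ln (- (x + c))) has_real_derivative 1 / (x + c)) (at x)"
    using neg by (auto intro!: derivative_eq_intros simp: field_simps)
  then show ?thesis
    by (rule has_field_derivative_transform_within_open[where S="{..< -c}"]) (use neg in auto)
qed

lemma log_profile_derivatives:
  assumes "open J" "- c \<notin> J" "\<forall>t\<in>J. h t = k * ln \<bar>t + c\<bar> + \<mu>" "x \<in> J"
  shows "(h has_real_derivative k / (x + c)) (at x)"
    and "((\<lambda>t. k / (t + c)) has_real_derivative - k / (x + c)\<^sup>2) (at x)"
proof -
  have xc: "x + c \<noteq> 0" using assms(2,4) by (metis add.commute add_eq_0_iff)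
  have "((\<lambda>t. k * ln \<bar>t + c\<bar> + \<mu>) has_real_derivative k * (1 / (x + c)) + 0) (at x)"
    by (rule DERIV_add[OF DERIV_cmult[OF ln_abs_has_derivative[OF xc]] DERIV_const])
  then have "((\<lambda>t. k * ln \<bar>t + c\<bar> + \<mu>) has_real_derivative k / (x + c)) (at x)"
    by simp
  then show "(h has_real_derivative k / (x + c)) (at x)"
    by (rule has_field_derivative_transform_within_open[where S=J]) (use assms in auto)
  have "((\<lambda>t. k / (t + c)) has_real_derivative (0 * (x + c) - k * (1 + 0)) / ((x + c) * (x + c))) (at x)"
    by (rule DERIV_divide[OF DERIV_const DERIV_add[OF DERIV_ident DERIV_const] xc])
  then show "((\<lambda>t. k / (t + c)) has_real_derivative - k / (x + c)\<^sup>2) (at x)"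
    by (simp add: power2_eq_square)
qed

section \<open>Type III translation surfaces over graphs\<close>

abbreviation type3_surface :: "(real \<Rightarrow> real) \<Rightarrow> (real \<Rightarrow> real) \<Rightarrow> real \<Rightarrow> real \<Rightarrow> real^3" where
  "type3_surface f g \<equiv> translation_surface (\<lambda>s. vector [s, 0, f s]) (\<lambda>t. vector [0, t, g t])"

lemma type3_surface_eq: "type3_surface f g s t = vector [s, exp (f s) * t, f s + g t]"
  by (simp add: translation_surface_def sol_mult_def)

lemma type3_Xs:
  assumes "(f has_real_derivative df) (at s)"
  shows "Xs (type3_surface f g) s t = vector [1, exp (f s) * df * t, df]"
  unfolding Xs_def type3_surface_eq
  by (rule vector_derivative_at, rule vector3_has_vector_derivative)
    (auto intro!: derivative_eq_intros assms)

lemma type3_Xt: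
  assumes "(g has_real_derivative dg) (at t)"
  shows "Xt (type3_surface f g) s t = vector [0, exp (f s), dg]"
  unfolding Xt_def type3_surface_eq
  by (rule vector_derivative_at, rule vector3_has_vector_derivative)
    (auto intro!: derivative_eq_intros assms)

text \<open>Second derivatives need the first-derivative formula on a neighbourhood, hence the
  open domains.\<close>

lemma type3_Xss:
  assumes "open I" "s \<in> I" "\<And>x. x \<in> I \<Longrightarrow> (f has_real_derivative df x) (at x)"
    "(df has_real_derivative ddf) (at s)"
  shows "Xss (type3_surface f g) s t = vector [0, exp (f s) * df s * df s * t + exp (f s) * ddf * t, ddf]"
  unfolding Xss_def
proof (rule vector_derivative_at)
  have "((\<lambda>s'. vector [1, exp (f s') * df s' * t, df s'] :: real^3) has_vector_derivative
      vector [0, exp (f s) * df s * df s * t + exp (f s) * ddf * t, ddf]) (at s)"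
    by (rule vector3_has_vector_derivative)
      (auto intro!: derivative_eq_intros assms simp: algebra_simps)
  then show "((\<lambda>s'. Xs (type3_surface f g) s' t) has_vector_derivative
      vector [0, exp (f s) * df s * df s * t + exp (f s) * ddf * t, ddf]) (at s)"
    by (rule has_vector_derivative_transform_within_open[OF _ assms(1,2)])
      (simp add: type3_Xs[OF assms(3)])
qed

lemma type3_Xst:
  assumes "(f has_real_derivative df) (at s)"
  shows "Xst (type3_surface f g) s t = vector [0, exp (f s) * df, 0]"
  unfolding Xst_def type3_Xs[OF assms]
  by (rule vector_derivative_at, rule vector3_has_vector_derivative)
    (auto intro!: derivative_eq_intros)

lemma type3_Xtt:
  assumes "open J" "t \<in> J" "\<And>x. x \<in> J \<Longrightarrow> (g has_real_derivative dg x) (at x)"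
    "(dg has_real_derivative ddg) (at t)"
  shows "Xtt (type3_surface f g) s t = vector [0, 0, ddg]"
  unfolding Xtt_def
proof (rule vector_derivative_at)
  have "((\<lambda>t'. vector [0, exp (f s), dg t'] :: real^3) has_vector_derivative vector [0, 0, ddg]) (at t)"
    by (rule vector3_has_vector_derivative) (auto intro!: derivative_eq_intros assms)
  then show "((\<lambda>t'. Xt (type3_surface f g) s t') has_vector_derivative vector [0, 0, ddg]) (at t)"
    by (rule has_vector_derivative_transform_within_open[OF _ assms(1,2)])
      (simp add: type3_Xt[OF assms(3)])
qed

text \<open>The minimal surface equation of type III graphs, in terms of A = e^{2z}, B = e^{-2z} e^{2f}
  (= e^{-2g}) and df = f', ddf = f'', dg = g', ddg = g''.  The first summand vanishes when
  g'' + g'^2 = 0, the second when t g' = 1, when f' = f'' = 0, or when g' = 0 and f'' = f'^2.\<close>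

definition type3_equation :: "real \<Rightarrow> real \<Rightarrow> real \<Rightarrow> real \<Rightarrow> real \<Rightarrow> real \<Rightarrow> real \<Rightarrow> real" where
  "type3_equation A B t df ddf dg ddg = (A + df\<^sup>2 + B * t\<^sup>2 * df\<^sup>2) * (ddg + dg\<^sup>2)
     + (1 - t * dg) * ((ddf + df\<^sup>2) * dg\<^sup>2 + B * (ddf - df\<^sup>2 + 2 * t * df\<^sup>2 * dg))"

lemma mc_numerator_type3:
  "mc_numerator (vector [s, F * t, z]) (vector [1, F * df * t, df]) (vector [0, F, dg])
     (vector [0, F * df * df * t + F * ddf * t, ddf]) (vector [0, F * df, 0]) (vector [0, 0, ddg])
   = F * type3_equation (exp (2 * z)) (exp (- 2 * z) * F\<^sup>2) t df ddf dg ddg"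
  by (simp add: mc_numerator_def type3_equation_def sol_inner_def sol_covd cross_components
      inner_vec_def sum_3 power2_eq_square) (simp add: algebra_simps)

lemma type3_mean_curvature_eq_0:
  assumes "open I" "open J" "s \<in> I" "t \<in> J"
    and "\<And>x. x \<in> I \<Longrightarrow> (f has_real_derivative df x) (at x)"
    and "\<And>x. x \<in> I \<Longrightarrow> (df has_real_derivative ddf x) (at x)"
    and "\<And>x. x \<in> J \<Longrightarrow> (g has_real_derivative dg x) (at x)"
    and "\<And>x. x \<in> J \<Longrightarrow> (dg has_real_derivative ddg x) (at x)"
    and "type3_equation (exp (2 * (f s + g t))) (exp (- 2 * (f s + g t)) * (exp (f s))\<^sup>2)
           t (df s) (ddf s) (dg t) (ddg t) = 0"
  shows "mean_curvature sol_metric (type3_surface f g) s t = 0"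
proof (rule mean_curvature_eq_0_if_numerator)
  have "Xs (type3_surface f g) s t = vector [1, exp (f s) * df s * t, df s]"
    "Xt (type3_surface f g) s t = vector [0, exp (f s), dg t]"
    "Xss (type3_surface f g) s t = vector [0, exp (f s) * df s * df s * t + exp (f s) * ddf s * t, ddf s]"
    "Xst (type3_surface f g) s t = vector [0, exp (f s) * df s, 0]"
    "Xtt (type3_surface f g) s t = vector [0, 0, ddg t]"
    using assms(1-8)
    by (auto intro!: type3_Xs type3_Xt type3_Xss[where I=I] type3_Xst type3_Xtt[where J=J])
  then show "mc_numerator (type3_surface f g s t) (Xs (type3_surface f g) s t)
      (Xt (type3_surface f g) s t) (Xss (type3_surface f g) s t) (Xst (type3_surface f g) s t)
      (Xtt (type3_surface f g) s t) = 0"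
    using assms(9) by (simp add: type3_surface_eq mc_numerator_type3)
qed

text \<open>Case (1): f constant and g = ln|t + c| + mu; here f' = f'' = 0 and g'' = -g'^2.\<close>

lemma minimal_const_f_log_g:
  assumes "open I" "open J" "\<forall>s\<in>I. f s = a" "- c \<notin> J" "\<forall>t\<in>J. g t = ln \<bar>t + c\<bar> + \<mu>"
  shows "minimal_on sol_metric (type3_surface f g) I J"
  unfolding minimal_on_def
proof (intro ballI)
  fix s t assume "s \<in> I" "t \<in> J"
  have g: "\<forall>t\<in>J. g t = 1 * ln \<bar>t + c\<bar> + \<mu>" using assms(5) by simp
  show "mean_curvature sol_metric (type3_surface f g) s t = 0"
  proof (rule type3_mean_curvature_eq_0[where df="\<lambda>_. 0" and ddf="\<lambda>_. 0"
        and dg="\<lambda>t. 1 / (t + c)" and ddg="\<lambda>t. - 1 / (t + c)\<^sup>2", OF assms(1,2) \<open>s \<in> I\<close> \<open>t \<in> J\<close>])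
    show "(f has_real_derivative 0) (at x)" if "x \<in> I" for x
      using constant_on_has_derivative[OF assms(1) that assms(3)] .
    show "(g has_real_derivative 1 / (x + c)) (at x)"
      "((\<lambda>t. 1 / (t + c)) has_real_derivative - 1 / (x + c)\<^sup>2) (at x)" if "x \<in> J" for x
      using log_profile_derivatives[OF assms(2,4) g that] by simp_all
  qed (simp_all add: type3_equation_def power_divide)
qed

text \<open>Case (2): f = -ln|s + c| + mu and g constant; here g' = g'' = 0 and f'' = f'^2.\<close>

lemma minimal_log_f_const_g:
  assumes "open I" "open J" "- c \<notin> I" "\<forall>s\<in>I. f s = - ln \<bar>s + c\<bar> + \<mu>" "\<forall>t\<in>J. g t = a"
  shows "minimal_on sol_metric (type3_surface f g) I J"
  unfolding minimal_on_def
proof (intro ballI)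
  fix s t assume "s \<in> I" "t \<in> J"
  have f: "\<forall>s\<in>I. f s = (- 1) * ln \<bar>s + c\<bar> + \<mu>" using assms(4) by simp
  show "mean_curvature sol_metric (type3_surface f g) s t = 0"
  proof (rule type3_mean_curvature_eq_0[where df="\<lambda>s. - 1 / (s + c)" and ddf="\<lambda>s. 1 / (s + c)\<^sup>2"
        and dg="\<lambda>_. 0" and ddg="\<lambda>_. 0", OF assms(1,2) \<open>s \<in> I\<close> \<open>t \<in> J\<close>])
    show "(f has_real_derivative - 1 / (x + c)) (at x)"
      "((\<lambda>s. - 1 / (s + c)) has_real_derivative 1 / (x + c)\<^sup>2) (at x)" if "x \<in> I" for x
      using log_profile_derivatives[OF assms(1,3) f that] by simp_all
    show "(g has_real_derivative 0) (at x)" if "x \<in> J" for x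
      using constant_on_has_derivative[OF assms(2) that assms(5)] .
  qed (simp_all add: type3_equation_def power_divide)
qed

text \<open>Case (3): g = ln|t| + mu and f arbitrary smooth; here t g' = 1 and g'' = -g'^2.\<close>

lemma minimal_log_g:
  assumes "open I" "open J" "smooth_on I f" "0 \<notin> J" "\<forall>t\<in>J. g t = ln \<bar>t\<bar> + \<mu>"
  shows "minimal_on sol_metric (type3_surface f g) I J"
  unfolding minimal_on_def
proof (intro ballI)
  fix s t assume "s \<in> I" "t \<in> J"
  have g: "\<forall>t\<in>J. g t = 1 * ln \<bar>t + 0\<bar> + \<mu>" using assms(5) by simp
  have J: "- 0 \<notin> J" using assms(4) by simp
  have "t \<noteq> 0" using assms(4) \<open>t \<in> J\<close> by auto
  show "mean_curvature sol_metric (type3_surface f g) s t = 0"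
  proof (rule type3_mean_curvature_eq_0[where df="deriv f" and ddf="deriv (deriv f)"
        and dg="\<lambda>t. 1 / (t + 0)" and ddg="\<lambda>t. - 1 / (t + 0)\<^sup>2", OF assms(1,2) \<open>s \<in> I\<close> \<open>t \<in> J\<close>])
    show "(f has_real_derivative deriv f x) (at x)"
      "(deriv f has_real_derivative deriv (deriv f) x) (at x)" if "x \<in> I" for x
      using smooth_on_derivatives[OF assms(3) that] by simp_all
    show "(g has_real_derivative 1 / (x + 0)) (at x)"
      "((\<lambda>t. 1 / (t + 0)) has_real_derivative - 1 / (x + 0)\<^sup>2) (at x)" if "x \<in> J" for x
      using log_profile_derivatives[OF assms(2) J g that] by simp_all
  qed (use \<open>t \<noteq> 0\<close> in \<open>simp add: type3_equation_def power_divide\<close>)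
qed

lemma minimal_const_f_const_g:
  assumes "open I" "open J" "\<forall>s\<in>I. f s = a" "\<forall>t\<in>J. g t = b"
  shows "minimal_on sol_metric (type3_surface f g) I J"
  unfolding minimal_on_def
proof (intro ballI)
  fix s t assume "s \<in> I" "t \<in> J"
  show "mean_curvature sol_metric (type3_surface f g) s t = 0"
  proof (rule type3_mean_curvature_eq_0[where df="\<lambda>_. 0" and ddf="\<lambda>_. 0"
        and dg="\<lambda>_. 0" and ddg="\<lambda>_. 0", OF assms(1,2) \<open>s \<in> I\<close> \<open>t \<in> J\<close>])
    show "(f has_real_derivative 0) (at x)" if "x \<in> I" for x
      using constant_on_has_derivative[OF assms(1) that assms(3)] .
    show "(g has_real_derivative 0) (at x)" if "x \<in> J" for x
      using constant_on_has_derivative[OF assms(2) that assms(4)] .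
  qed (simp_all add: type3_equation_def)
qed

section \<open>The vertical planes x = x0\<close>

abbreviation vertical_plane :: "real \<Rightarrow> (real \<Rightarrow> real) \<Rightarrow> real \<Rightarrow> real \<Rightarrow> real^3" where
  "vertical_plane x0 g \<equiv> translation_surface (\<lambda>s. vector [x0, 0, s]) (\<lambda>t. vector [0, t, g t])"

lemma vertical_plane_eq: "vertical_plane x0 g s t = vector [x0, exp s * t, s + g t]"
  by (simp add: translation_surface_def sol_mult_def)

lemma minimal_vertical_plane:
  assumes "open J" "smooth_on J g"
  shows "minimal_on sol_metric (vertical_plane x0 g) I J"
  unfolding minimal_on_def
proof (intro ballI mean_curvature_eq_0_if_numerator)
  fix s t assume "t \<in> J"
  have xs: "Xs (vertical_plane x0 g) s' t' = vector [0, exp s' * t', 1]" for s' t'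
    unfolding Xs_def vertical_plane_eq
    by (rule vector_derivative_at, rule vector3_has_vector_derivative)
      (auto intro!: derivative_eq_intros)
  have xt: "Xt (vertical_plane x0 g) s' t' = vector [0, exp s', deriv g t']" if "t' \<in> J" for s' t'
    unfolding Xt_def vertical_plane_eq
    by (rule vector_derivative_at, rule vector3_has_vector_derivative)
      (auto intro!: derivative_eq_intros smooth_on_derivatives(1)[OF assms(2) that])
  have xss: "Xss (vertical_plane x0 g) s t = vector [0, exp s * t, 0]"
    unfolding Xss_def xs
    by (rule vector_derivative_at, rule vector3_has_vector_derivative)
      (auto intro!: derivative_eq_intros)
  have xst: "Xst (vertical_plane x0 g) s t = vector [0, exp s, 0]"
    unfolding Xst_def xs
    by (rule vector_derivative_at, rule vector3_has_vector_derivative)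
      (auto intro!: derivative_eq_intros)
  have xtt: "Xtt (vertical_plane x0 g) s t = vector [0, 0, deriv (deriv g) t]"
    unfolding Xtt_def
  proof (rule vector_derivative_at)
    have "((\<lambda>t'. vector [0, exp s, deriv g t'] :: real^3) has_vector_derivative
        vector [0, 0, deriv (deriv g) t]) (at t)"
      by (rule vector3_has_vector_derivative)
        (auto intro!: derivative_eq_intros smooth_on_derivatives(2)[OF assms(2) \<open>t \<in> J\<close>])
    then show "((\<lambda>t'. Xt (vertical_plane x0 g) s t') has_vector_derivative
        vector [0, 0, deriv (deriv g) t]) (at t)"
      by (rule has_vector_derivative_transform_within_open[OF _ assms(1) \<open>t \<in> J\<close>]) (simp add: xt)
  qed
  show "mc_numerator (vertical_plane x0 g s t) (Xs (vertical_plane x0 g) s t)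
      (Xt (vertical_plane x0 g) s t) (Xss (vertical_plane x0 g) s t)
      (Xst (vertical_plane x0 g) s t) (Xtt (vertical_plane x0 g) s t) = 0"
    unfolding xs xt[OF \<open>t \<in> J\<close>] xss xst xtt vertical_plane_eq
    by (simp add: mc_numerator_def sol_covd cross_components inner_vec_def sum_3)
qed

theorem mainTheorem3:
  fixes I J :: "real set"
  assumes "open_interval I" and "open_interval J"
  shows
    "(\<forall>f g. smooth_on I f \<and> smooth_on J g \<longrightarrow>
       ((\<exists>a c \<mu>. (\<forall>s\<in>I. f s = a) \<and> - c \<notin> J \<and> (\<forall>t\<in>J. g t = ln \<bar>t + c\<bar> + \<mu>))
        \<or> (\<exists>a c \<mu>. - c \<notin> I \<and> (\<forall>s\<in>I. f s = - ln \<bar>s + c\<bar> + \<mu>) \<and> (\<forall>t\<in>J. g t = a))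
        \<or> (\<exists>\<mu>. 0 \<notin> J \<and> (\<forall>t\<in>J. g t = ln \<bar>t\<bar> + \<mu>))
        \<or> (\<exists>a b. (\<forall>s\<in>I. f s = a) \<and> (\<forall>t\<in>J. g t = b)))
       \<longrightarrow> minimal_on sol_metric
             (translation_surface (\<lambda>s. vector [s, 0, f s]) (\<lambda>t. vector [0, t, g t])) I J) \<and>
    (\<forall>x0 g. smooth_on J g \<longrightarrow>
       minimal_on sol_metric
         (translation_surface (\<lambda>s. vector [x0, 0, s]) (\<lambda>t. vector [0, t, g t])) I J
       \<and> (\<forall>s t. translation_surface (\<lambda>s. vector [x0, 0, s]) (\<lambda>t. vector [0, t, g t]) s t $ 1 = x0))"
proof -
  have I: "open I" and J: "open J" using assms unfolding open_interval_def by auto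
  show ?thesis
  proof (intro conjI allI impI)
    fix f g
    assume smooth: "smooth_on I f \<and> smooth_on J g"
      and cases: "(\<exists>a c \<mu>. (\<forall>s\<in>I. f s = a) \<and> - c \<notin> J \<and> (\<forall>t\<in>J. g t = ln \<bar>t + c\<bar> + \<mu>))
        \<or> (\<exists>a c \<mu>. - c \<notin> I \<and> (\<forall>s\<in>I. f s = - ln \<bar>s + c\<bar> + \<mu>) \<and> (\<forall>t\<in>J. g t = a))
        \<or> (\<exists>\<mu>. 0 \<notin> J \<and> (\<forall>t\<in>J. g t = ln \<bar>t\<bar> + \<mu>))
        \<or> (\<exists>a b. (\<forall>s\<in>I. f s = a) \<and> (\<forall>t\<in>J. g t = b))"
    from cases show "minimal_on sol_metric (type3_surface f g) I J"
    proof (elim disjE exE conjE)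
      show ?thesis if "\<forall>s\<in>I. f s = a" "- c \<notin> J" "\<forall>t\<in>J. g t = ln \<bar>t + c\<bar> + \<mu>" for a c \<mu>
        using minimal_const_f_log_g[OF I J that] .
      show ?thesis if "- c \<notin> I" "\<forall>s\<in>I. f s = - ln \<bar>s + c\<bar> + \<mu>" "\<forall>t\<in>J. g t = a" for a c \<mu>
        using minimal_log_f_const_g[OF I J that] .
      show ?thesis if "0 \<notin> J" "\<forall>t\<in>J. g t = ln \<bar>t\<bar> + \<mu>" for \<mu>
        using minimal_log_g[OF I J _ that] smooth by blast
      show ?thesis if "\<forall>s\<in>I. f s = a" "\<forall>t\<in>J. g t = b" for a b
        using minimal_const_f_const_g[OF I J that] .
    qed
  next
    fix x0 g assume "smooth_on J g"
    then show "minimal_on sol_metric (vertical_plane x0 g) I J"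
      by (rule minimal_vertical_plane[OF J])
  next
    fix x0 g s t show "vertical_plane x0 g s t $ 1 = x0"
      by (simp add: vertical_plane_eq)
  qed
qed

end
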